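(* Let $f$ be a probability density on $\mathbb{R}$ and let $\pi_0$ be the value of the problem $$\text{maximize }\int h\quad\text{over}\quad\{h:\mathbb{R}\to\mathbb{R}_+\text{ log-concave},\ h\le f\text{ a.e.}\}.$$ Let $\hat f_n$ be a density estimator computed from a sample of size $n$ from $f$, with each $\hat f_n$ a probability density, and assume $$\mathbb{E}\left[\operatorname{ess\,sup}_{|x|\le a}\frac{\max\{\hat f_n(x),f(x)\}}{\min\{\hat f_n(x),f(x)\}}\right]\to1\quad\text{as }n\to\infty,\ \text{for every } a>0.$$ Let $\hat\pi_0$ be the value of the same optimization problem with $f$ replaced by $\hat f_n$. Then $\hat\pi_0\to\pi_0$ in probability as $n\to\infty$.
   Context: A function $h:\mathbb{R}\to[0,\infty)$ is log-concave if $\log h:\mathbb{R}\to[-\infty,\infty)$ is concave (with $\log0=-\infty$). *)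

theory Defs
  imports "HOL-Probability.Probability"
begin

definition prob_density :: "(real \<Rightarrow> real) \<Rightarrow> bool" where
  "prob_density f \<longleftrightarrow> f \<in> borel_measurable lborel \<and> (\<forall>x. 0 \<le> f x)
     \<and> integrable lborel f \<and> integral\<^sup>L lborel f = 1"

definition log_ext :: "(real \<Rightarrow> real) \<Rightarrow> real \<Rightarrow> ereal" where
  "log_ext h x = (if h x = 0 then -\<infinity> else ereal (ln (h x)))"

definition log_concave :: "(real \<Rightarrow> real) \<Rightarrow> bool" where
  "log_concave h \<longleftrightarrow> (\<forall>x. 0 \<le> h x) \<and>
     (\<forall>x y t. 0 \<le> t \<and> t \<le> 1 \<longrightarrow>
        ereal t * log_ext h x + ereal (1 - t) * log_ext h y \<le> log_ext h (t * x + (1 - t) * y))"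

definition lc_value :: "(real \<Rightarrow> real) \<Rightarrow> real" where
  "lc_value f = enn2real (SUP h \<in> {h. log_concave h \<and> (AE x in lborel. h x \<le> f x)}.
                              \<integral>\<^sup>+ x. ennreal (h x) \<partial>lborel)"

(* max{u,v}/min{u,v} with r/0 = \<infinity> for r > 0 and 0/0 = 1 *)
definition ratio :: "real \<Rightarrow> real \<Rightarrow> ennreal" where
  "ratio u v = (if min u v = 0 then (if max u v = 0 then 1 else \<top>)
                else ennreal (max u v / min u v))"

end

theory Submission
  imports Defs
begin

text \<open>Fix a window \<open>[-a, a]\<close> carrying all but \<open>\<epsilon>/2\<close> of the mass of \<open>f\<close>, and \<open>d = \<epsilon>/8\<close>.
If \<open>f\<^sub>n/(1+d) \<le> f \<le> (1+d) f\<^sub>n\<close> a.e. on the window, then every log-concave minorant of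
one density, cut off to the window and divided by \<open>1+d\<close>, is a log-concave minorant of the
other; so the two optimal values differ by at most \<open>d\<close> plus the tail masses, which differ
by at most \<open>d\<close>. The event where the ratio bound fails on a set of positive measure forces the
essential supremum of the ratio over the window to be at least \<open>1+d\<close> (it is always \<open>\<ge> 1\<close>),
so by a Markov-type argument its probability tends to \<open>0\<close>.\<close>

subsection \<open>Log-concave functions\<close>

lemma log_concave_ln_ineq:
  assumes "log_concave h" "0 \<le> t" "t \<le> 1" "h x > 0" "h y > 0"
  shows "h (t*x+(1-t)*y) > 0 \<and> t * ln (h x) + (1-t) * ln (h y) \<le> ln (h (t*x+(1-t)*y))"
proof -
  have "ereal t * log_ext h x + ereal (1 - t) * log_ext h y \<le> log_ext h (t * x + (1 - t) * y)"
    using assms unfolding log_concave_def by blast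
  hence *: "ereal (t * ln (h x) + (1-t) * ln (h y)) \<le> log_ext h (t * x + (1 - t) * y)"
    using assms(4,5) by (simp add: log_ext_def)
  have "h (t*x+(1-t)*y) \<ge> 0" using assms(1) unfolding log_concave_def by blast
  with * show ?thesis
    by (cases "h (t*x+(1-t)*y) = 0") (simp_all add: log_ext_def)
qed

lemma log_ext_convex_comb_at_zero:
  assumes "0 < t" "h x = 0" "t \<le> 1"
  shows "ereal t * log_ext h x + ereal (1 - t) * log_ext h y = -\<infinity>"
proof -
  have "ereal t * log_ext h x = -\<infinity>" using assms by (simp add: log_ext_def)
  moreover have "ereal (1 - t) * log_ext h y \<noteq> \<infinity>"
    using assms by (cases "log_ext h y") (auto simp: ereal_mult_infty log_ext_def split: if_splits)
  ultimately show ?thesis by (cases "ereal (1 - t) * log_ext h y") auto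
qed

lemma log_concaveI:
  assumes nonneg: "\<And>x. 0 \<le> h x"
    and ineq: "\<And>x y t. 0 \<le> t \<Longrightarrow> t \<le> 1 \<Longrightarrow> h x > 0 \<Longrightarrow> h y > 0 \<Longrightarrow>
       h (t*x+(1-t)*y) > 0 \<and> t * ln (h x) + (1-t) * ln (h y) \<le> ln (h (t*x+(1-t)*y))"
  shows "log_concave h"
  unfolding log_concave_def
proof (intro conjI allI impI)
  fix x show "0 \<le> h x" by fact
next
  fix x y t :: real assume t: "0 \<le> t \<and> t \<le> 1"
  show "ereal t * log_ext h x + ereal (1 - t) * log_ext h y \<le> log_ext h (t * x + (1 - t) * y)"
  proof (cases "t = 0 \<or> t = 1")
    case True then show ?thesis by (auto simp: zero_ereal_def[symmetric])
  next
    case False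
    hence t': "0 < t" "t < 1" using t by auto
    consider "h x = 0" | "h y = 0" | "h x > 0" "h y > 0" using nonneg[of x] nonneg[of y] by linarith
    then show ?thesis
    proof cases
      case 1
      have eq: "ereal t * log_ext h x + ereal (1 - t) * log_ext h y = -\<infinity>"
        using log_ext_convex_comb_at_zero[of t h x y] 1 t' by simp
      show ?thesis unfolding eq by simp
    next
      case 2
      have "ereal (1 - t) * log_ext h y + ereal (1 - (1 - t)) * log_ext h x = -\<infinity>"
        using log_ext_convex_comb_at_zero[of "1 - t" h y x] 2 t' by simp
      hence eq: "ereal t * log_ext h x + ereal (1 - t) * log_ext h y = -\<infinity>"
        by (simp add: add.commute)
      show ?thesis unfolding eq by simp
    next
      case 3 then show ?thesis using ineq[OF _ _ 3, of t] t by (simp add: log_ext_def)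
    qed
  qed
qed

lemma log_concave_superlevel_convex:
  assumes "log_concave h" "c > 0"
  shows "convex {x. c \<le> h x}"
  unfolding convex_alt
proof (intro ballI allI impI)
  fix x y u :: real
  assume x: "x \<in> {x. c \<le> h x}" and y: "y \<in> {x. c \<le> h x}" and u: "0 \<le> u \<and> u \<le> 1"
  have pos: "h x > 0" "h y > 0" using x y assms(2) by auto
  from log_concave_ln_ineq[OF assms(1) _ _ pos(2) pos(1), of "1-u"] u
  have *: "h ((1-u)*y + u*x) > 0" "(1-u) * ln (h y) + u * ln (h x) \<le> ln (h ((1-u)*y+u*x))"
    by (auto simp: algebra_simps)
  have "ln c \<le> ln (h x)" "ln c \<le> ln (h y)" using x y assms(2) by auto
  hence "(1-u) * ln c + u * ln c \<le> (1-u) * ln (h y) + u * ln (h x)"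
    using u by (intro add_mono mult_left_mono) auto
  hence "ln c \<le> ln (h ((1-u)*y+u*x))" using * by (simp add: algebra_simps)
  hence "c \<le> h ((1-u)*y+u*x)" using *(1) assms(2) by simp
  then show "(1 - u) *\<^sub>R y + u *\<^sub>R x \<in> {x. c \<le> h x}" by (simp add: add.commute)
qed

lemma log_concave_borel_measurable:
  assumes "log_concave h" shows "h \<in> borel_measurable borel"
  unfolding borel_measurable_iff_ge
proof
  fix c :: real
  have "is_interval {x. c \<le> h x}"
  proof (cases "c \<le> 0")
    case True
    hence "{x. c \<le> h x} = UNIV"
      using assms unfolding log_concave_def by (auto intro: order_trans)
    then show ?thesis by simp
  next
    case False
    then show ?thesis
      using log_concave_superlevel_convex[OF assms] by (simp add: is_interval_convex_1)
  qed
  then show "{w \<in> space borel. c \<le> h w} \<in> sets borel"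
    using real_interval_borel_measurable by simp
qed

lemma log_concave_restrict_scale:
  assumes "log_concave h" "c > 0"
  shows "log_concave (\<lambda>x. indicator {-a..a} x * h x * c)"
proof (rule log_concaveI)
  have nn: "\<And>x. 0 \<le> h x" using assms unfolding log_concave_def by blast
  fix x show "0 \<le> indicator {-a..a} x * h x * c" using nn assms(2) by (simp add: indicator_def)
next
  have nn: "\<And>x. 0 \<le> h x" using assms unfolding log_concave_def by blast
  fix x y t :: real
  assume t: "0 \<le> t" "t \<le> 1" and px: "indicator {-a..a} x * h x * c > 0"
     and py: "indicator {-a..a} y * h y * c > 0"
  have xI: "x \<in> {-a..a}" and hx: "h x > 0"
    using px nn[of x] assms(2) by (auto simp: indicator_def zero_less_mult_iff split: if_splits)
  have yI: "y \<in> {-a..a}" and hy: "h y > 0"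
    using py nn[of y] assms(2) by (auto simp: indicator_def zero_less_mult_iff split: if_splits)
  define z where "z = t*x+(1-t)*y"
  have "z \<in> {-a..a}"
    using convex_real_interval(5)[of "-a" a] xI yI t unfolding convex_alt z_def
    by (metis add.commute diff_add_cancel real_scaleR_def)
  moreover from log_concave_ln_ineq[OF assms(1) t hx hy] have
    hz: "h z > 0" and ineq: "t * ln (h x) + (1-t) * ln (h y) \<le> ln (h z)" unfolding z_def by auto
  moreover have "t * ln (h x * c) + (1-t) * ln (h y * c) = t * ln (h x) + (1-t) * ln (h y) + ln c"
    using hx hy assms(2) by (simp add: ln_mult algebra_simps)
  ultimately show "indicator {-a..a} (t*x+(1-t)*y) * h (t*x+(1-t)*y) * c > 0 \<and>
      t * ln (indicator {-a..a} x * h x * c) + (1-t) * ln (indicator {-a..a} y * h y * c)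
      \<le> ln (indicator {-a..a} (t*x+(1-t)*y) * h (t*x+(1-t)*y) * c)"
    using xI yI assms(2) unfolding z_def[symmetric] by (simp add: ln_mult)
qed

subsection \<open>Comparing the optimal values of two densities\<close>

definition lc_minorants :: "(real \<Rightarrow> real) \<Rightarrow> (real \<Rightarrow> real) set" where
  "lc_minorants g = {h. log_concave h \<and> (AE x in lborel. h x \<le> g x)}"

definition lc_mass_sup :: "(real \<Rightarrow> real) \<Rightarrow> ennreal" where
  "lc_mass_sup g = (SUP h \<in> lc_minorants g. \<integral>\<^sup>+ x. ennreal (h x) \<partial>lborel)"

definition window_mass :: "(real \<Rightarrow> real) \<Rightarrow> real \<Rightarrow> ennreal" where
  "window_mass p a = (\<integral>\<^sup>+ x. ennreal (p x) * indicator {-a..a} x \<partial>lborel)"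

definition tail_mass :: "(real \<Rightarrow> real) \<Rightarrow> real \<Rightarrow> ennreal" where
  "tail_mass p a = (\<integral>\<^sup>+ x. ennreal (p x) * indicator (- {-a..a}) x \<partial>lborel)"

lemma lc_value_eq_enn2real_lc_mass_sup: "lc_value g = enn2real (lc_mass_sup g)"
  unfolding lc_value_def lc_mass_sup_def lc_minorants_def by simp

lemma prob_density_nn_integral:
  assumes "prob_density p" shows "(\<integral>\<^sup>+ x. ennreal (p x) \<partial>lborel) = 1"
proof -
  have "(\<integral>\<^sup>+ x. ennreal (p x) \<partial>lborel) = ennreal (integral\<^sup>L lborel p)"
    using assms unfolding prob_density_def by (intro nn_integral_eq_integral) auto
  then show ?thesis using assms unfolding prob_density_def by simp
qed

lemma window_mass_plus_tail_mass:
  assumes "prob_density p" shows "window_mass p a + tail_mass p a = 1"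
proof -
  have m: "p \<in> borel_measurable borel" using assms unfolding prob_density_def by simp
  have "(\<integral>\<^sup>+ x. ennreal (p x) \<partial>lborel) =
     (\<integral>\<^sup>+ x. ennreal (p x) * indicator {-a..a} x + ennreal (p x) * indicator (- {-a..a}) x \<partial>lborel)"
    by (intro nn_integral_cong) (auto split: split_indicator)
  also have "\<dots> = window_mass p a + tail_mass p a" unfolding window_mass_def tail_mass_def
    using m by (intro nn_integral_add) auto
  finally show ?thesis using prob_density_nn_integral[OF assms] by simp
qed

lemma window_tail_mass_finite:
  assumes "prob_density p" shows "window_mass p a < \<top>" "tail_mass p a < \<top>"
  using window_mass_plus_tail_mass[OF assms, of a] by (auto simp: less_top[symmetric])

lemma enn2real_window_plus_tail_mass:
  assumes "prob_density p" shows "enn2real (window_mass p a) + enn2real (tail_mass p a) = 1"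
  using window_mass_plus_tail_mass[OF assms, of a] window_tail_mass_finite[OF assms, of a]
  by (metis enn2real_1 enn2real_plus)

lemma lc_mass_sup_le_1: assumes "prob_density p" shows "lc_mass_sup p \<le> 1"
  unfolding lc_mass_sup_def
proof (rule SUP_least)
  fix h assume "h \<in> lc_minorants p"
  hence "AE x in lborel. ennreal (h x) \<le> ennreal (p x)"
    unfolding lc_minorants_def by (auto elim: eventually_mono intro: ennreal_leI)
  hence "(\<integral>\<^sup>+ x. ennreal (h x) \<partial>lborel) \<le> (\<integral>\<^sup>+ x. ennreal (p x) \<partial>lborel)"
    by (rule nn_integral_mono_AE)
  then show "(\<integral>\<^sup>+ x. ennreal (h x) \<partial>lborel) \<le> 1" using prob_density_nn_integral[OF assms] by simp
qed

lemma restrict_scale_in_lc_minorants: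
  assumes h: "h \<in> lc_minorants p" and d: "d \<ge> 0" and q: "\<And>x. 0 \<le> q x"
    and bound: "AE x in lborel. x \<in> {-a..a} \<longrightarrow> p x \<le> (1+d) * q x"
  shows "(\<lambda>x. indicator {-a..a} x * h x * (1/(1+d))) \<in> lc_minorants q"
proof -
  have lc: "log_concave h" and hle: "AE x in lborel. h x \<le> p x"
    using h unfolding lc_minorants_def by auto
  have "log_concave (\<lambda>x. indicator {-a..a} x * h x * (1/(1+d)))"
    by (rule log_concave_restrict_scale[OF lc]) (use d in simp)
  moreover have "AE x in lborel. indicator {-a..a} x * h x * (1/(1+d)) \<le> q x"
    using hle bound
  proof eventually_elim
    case (elim x)
    then show ?case
      using q[of x] d by (cases "x \<in> {-a..a}") (auto simp: field_simps)
  qed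
  ultimately show ?thesis unfolding lc_minorants_def by simp
qed

lemma lc_mass_sup_le_scaled_plus_tail:
  assumes p: "prob_density p" and q: "prob_density q" and d: "d \<ge> 0"
    and bound: "AE x in lborel. x \<in> {-a..a} \<longrightarrow> p x \<le> (1+d) * q x"
  shows "lc_mass_sup p \<le> ennreal (1+d) * lc_mass_sup q + tail_mass p a"
  unfolding lc_mass_sup_def[of p]
proof (rule SUP_least)
  fix h assume h: "h \<in> lc_minorants p"
  have hle: "AE x in lborel. h x \<le> p x" and hnn: "\<And>x. 0 \<le> h x"
    using h unfolding lc_minorants_def log_concave_def by auto
  have hm: "h \<in> borel_measurable borel"
    using h log_concave_borel_measurable unfolding lc_minorants_def by blast
  define h' where "h' = (\<lambda>x. indicator {-a..a} x * h x * (1/(1+d)))"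
  have h'_min: "h' \<in> lc_minorants q" unfolding h'_def
    using restrict_scale_in_lc_minorants[OF h d _ bound] q by (simp add: prob_density_def)
  have "(\<integral>\<^sup>+ x. ennreal (h x) \<partial>lborel) =
     (\<integral>\<^sup>+ x. ennreal (1+d) * ennreal (h' x) + ennreal (h x) * indicator (- {-a..a}) x \<partial>lborel)"
  proof (intro nn_integral_cong)
    fix x show "ennreal (h x) = ennreal (1+d) * ennreal (h' x) + ennreal (h x) * indicator (- {-a..a}) x"
    proof (cases "x \<in> {-a..a}")
      case True
      have "ennreal (1+d) * ennreal (h' x) = ennreal ((1+d) * h' x)"
        by (rule ennreal_mult[symmetric]) (use d hnn[of x] in \<open>auto simp: h'_def\<close>)
      also have "(1+d) * h' x = h x" using True d unfolding h'_def by simp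
      finally show ?thesis using True by simp
    qed (simp add: h'_def)
  qed
  also have "\<dots> = ennreal (1+d) * (\<integral>\<^sup>+ x. ennreal (h' x) \<partial>lborel)
       + (\<integral>\<^sup>+ x. ennreal (h x) * indicator (- {-a..a}) x \<partial>lborel)"
    using hm by (subst nn_integral_add) (auto simp: nn_integral_cmult h'_def)
  also have "\<dots> \<le> ennreal (1+d) * lc_mass_sup q + tail_mass p a"
  proof (intro add_mono mult_left_mono)
    show "(\<integral>\<^sup>+ x. ennreal (h' x) \<partial>lborel) \<le> lc_mass_sup q"
      unfolding lc_mass_sup_def using h'_min by (rule SUP_upper)
    show "(\<integral>\<^sup>+ x. ennreal (h x) * indicator (- {-a..a}) x \<partial>lborel) \<le> tail_mass p a"
      unfolding tail_mass_def using hle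
      by (intro nn_integral_mono_AE) (auto elim!: eventually_mono intro!: mult_right_mono ennreal_leI)
  qed auto
  finally show "(\<integral>\<^sup>+ x. ennreal (h x) \<partial>lborel) \<le> ennreal (1+d) * lc_mass_sup q + tail_mass p a" .
qed

lemma window_mass_le_scaled:
  assumes p: "prob_density p" and d: "d \<ge> 0"
    and bound: "AE x in lborel. x \<in> {-a..a} \<longrightarrow> q x \<le> (1+d) * p x"
  shows "window_mass q a \<le> ennreal (1+d) * window_mass p a"
proof -
  have "window_mass q a \<le> (\<integral>\<^sup>+ x. ennreal (1+d) * (ennreal (p x) * indicator {-a..a} x) \<partial>lborel)"
    unfolding window_mass_def using bound
  proof (intro nn_integral_mono_AE, eventually_elim)
    case (elim x)
    have "ennreal (1+d) * ennreal (p x) = ennreal ((1+d) * p x)"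
      using d p by (simp add: prob_density_def ennreal_mult)
    then show ?case using elim by (cases "x \<in> {-a..a}") (auto intro: ennreal_leI)
  qed
  also have "\<dots> = ennreal (1+d) * window_mass p a" unfolding window_mass_def
    using p by (intro nn_integral_cmult) (auto simp: prob_density_def)
  finally show ?thesis .
qed

lemma enn2real_tail_mass_le:
  assumes p: "prob_density p" and q: "prob_density q" and d: "d \<ge> 0"
    and bound: "AE x in lborel. x \<in> {-a..a} \<longrightarrow> q x \<le> (1+d) * p x"
  shows "enn2real (tail_mass p a) \<le> d + enn2real (tail_mass q a)"
proof -
  have "enn2real (window_mass q a) \<le> enn2real (ennreal (1+d) * window_mass p a)"
    using window_mass_le_scaled[OF p d bound] window_tail_mass_finite[OF p]
    by (intro enn2real_mono) (auto simp: ennreal_mult_less_top)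
  hence "enn2real (window_mass q a) \<le> (1+d) * enn2real (window_mass p a)"
    using d by (simp only: enn2real_mult enn2real_ennreal)
  moreover have "enn2real (window_mass p a) \<le> 1"
    using enn2real_window_plus_tail_mass[OF p, of a] enn2real_nonneg[of "tail_mass p a"] by linarith
  ultimately show ?thesis
    using enn2real_window_plus_tail_mass[OF p, of a] enn2real_window_plus_tail_mass[OF q, of a] d
      mult_left_le[of "enn2real (window_mass p a)" d]
    by (simp add: algebra_simps)
qed

lemma enn2real_le_affine:
  fixes x y z :: ennreal
  assumes "x \<le> ennreal c * y + z" "y < \<top>" "z < \<top>" "c \<ge> 0"
  shows "enn2real x \<le> c * enn2real y + enn2real z"
proof -
  have "enn2real x \<le> enn2real (ennreal c * y + z)"
    using assms by (intro enn2real_mono) (auto simp: ennreal_mult_less_top)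
  also have "\<dots> = c * enn2real y + enn2real z"
    using assms by (subst enn2real_plus) (auto simp: ennreal_mult_less_top enn2real_mult)
  finally show ?thesis .
qed

lemma lc_value_dist_le:
  assumes p: "prob_density p" and f: "prob_density f" and d: "d \<ge> 0"
    and bound: "AE x in lborel. x \<in> {-a..a} \<longrightarrow> p x \<le> (1+d) * f x \<and> f x \<le> (1+d) * p x"
  shows "\<bar>lc_value p - lc_value f\<bar> \<le> 2*d + enn2real (tail_mass f a)"
proof -
  have bound_pf: "AE x in lborel. x \<in> {-a..a} \<longrightarrow> p x \<le> (1+d) * f x"
    and bound_fp: "AE x in lborel. x \<in> {-a..a} \<longrightarrow> f x \<le> (1+d) * p x"
    using bound by (auto elim: eventually_mono)
  have fin: "lc_mass_sup p < \<top>" "lc_mass_sup f < \<top>"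
    using lc_mass_sup_le_1[OF p] lc_mass_sup_le_1[OF f] by (auto simp: top.not_eq_extremum intro: le_less_trans)
  have le1: "enn2real (lc_mass_sup p) \<le> 1" "enn2real (lc_mass_sup f) \<le> 1"
    using lc_mass_sup_le_1[OF p] lc_mass_sup_le_1[OF f] by (auto simp: enn2real_leI)
  have "enn2real (lc_mass_sup p) \<le> (1+d) * enn2real (lc_mass_sup f) + enn2real (tail_mass p a)"
    using lc_mass_sup_le_scaled_plus_tail[OF p f d bound_pf] fin window_tail_mass_finite[OF p] d
    by (intro enn2real_le_affine) auto
  moreover have "enn2real (lc_mass_sup f) \<le> (1+d) * enn2real (lc_mass_sup p) + enn2real (tail_mass f a)"
    using lc_mass_sup_le_scaled_plus_tail[OF f p d bound_fp] fin window_tail_mass_finite[OF f] d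
    by (intro enn2real_le_affine) auto
  moreover have "enn2real (tail_mass p a) \<le> d + enn2real (tail_mass f a)"
    by (rule enn2real_tail_mass_le[OF p f d bound_fp])
  ultimately show ?thesis unfolding lc_value_eq_enn2real_lc_mass_sup
    using le1 d mult_left_le[OF le1(1), of d] mult_left_le[OF le1(2), of d]
    by (simp add: algebra_simps abs_le_iff)
qed

lemma exists_tail_mass_less:
  assumes f: "prob_density f" and e: "e > 0"
  shows "\<exists>a>0. enn2real (tail_mass f a) < e"
proof -
  have fm: "f \<in> borel_measurable borel" using f unfolding prob_density_def by simp
  define g where "g = (\<lambda>i x. ennreal (f x) * indicator (- {- real (Suc i)..real (Suc i)}) x)"
  have "(\<integral>\<^sup>+ x. (INF i. g i x) \<partial>lborel) = (INF i. integral\<^sup>N lborel (g i))"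
  proof (rule nn_integral_monotone_convergence_INF_AE')
    show "AE x in lborel. g (Suc i) x \<le> g i x" for i
      unfolding g_def by (auto split: split_indicator)
    show "g i \<in> borel_measurable lborel" for i unfolding g_def using fm by measurable
    have "integral\<^sup>N lborel (g 0) \<le> (\<integral>\<^sup>+ x. ennreal (f x) \<partial>lborel)" unfolding g_def
      by (intro nn_integral_mono) (auto split: split_indicator)
    then show "integral\<^sup>N lborel (g 0) < \<infinity>"
      using prob_density_nn_integral[OF f] by (auto simp: le_less_trans)
  qed
  moreover have "(INF i. g i x) = 0" for x
  proof -
    obtain n :: nat where "\<bar>x\<bar> \<le> real n" using real_arch_simple by blast
    hence "g n x = 0" unfolding g_def by (auto split: split_indicator)
    thus ?thesis by (metis INF_lower UNIV_I le_zero_eq)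
  qed
  ultimately have "(INF i. integral\<^sup>N lborel (g i)) < ennreal e" using e by simp
  then obtain i where i: "tail_mass f (real (Suc i)) < ennreal e"
    by (auto simp: INF_less_iff tail_mass_def g_def)
  hence "enn2real (tail_mass f (real (Suc i))) < e"
    using e window_tail_mass_finite(2)[OF f] by (simp add: enn2real_less_iff)
  thus ?thesis by (intro exI[of _ "real (Suc i)"]) auto
qed

subsection \<open>The ratio of two densities on a window\<close>

definition ratio_excess_set :: "(real \<Rightarrow> real) \<Rightarrow> (real \<Rightarrow> real) \<Rightarrow> real \<Rightarrow> real \<Rightarrow> real set" where
  "ratio_excess_set p q a d = {x \<in> {-a..a}. (1+d) * min (p x) (q x) < max (p x) (q x)}"

lemma ratio_excess_set_sets:
  assumes "p \<in> borel_measurable borel" "q \<in> borel_measurable borel"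
  shows "ratio_excess_set p q a d \<in> sets lborel"
  using assms unfolding ratio_excess_set_def by measurable

lemma ratio_ge_1:
  fixes u v :: real
  assumes "0 \<le> u" "0 \<le> v"
  shows "1 \<le> ratio u v"
proof (cases "min u v = 0")
  case False
  hence "min u v > 0" using assms by (auto simp: min_def)
  hence "1 \<le> max u v / min u v" by (simp add: le_divide_eq)
  then show ?thesis using False by (simp add: ratio_def)
qed (auto simp: ratio_def)

lemma ratio_ge_of_excess:
  fixes u v d :: real
  assumes "0 \<le> u" "0 \<le> v" "0 \<le> d" "(1+d) * min u v < max u v"
  shows "ennreal (1+d) \<le> ratio u v"
proof (cases "min u v = 0")
  case False
  hence mp: "min u v > 0" using assms by (auto simp: min_def)
  hence "1+d \<le> max u v / min u v" using assms(4) by (simp add: le_divide_eq)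
  then show ?thesis using False by (simp add: ratio_def ennreal_leI)
qed (use assms in \<open>auto simp: ratio_def\<close>)

lemma two_sided_bound_of_max_le_min:
  fixes u v d :: real
  assumes "0 \<le> u" "0 \<le> v" "0 \<le> d" "max u v \<le> (1+d) * min u v"
  shows "u \<le> (1+d) * v \<and> v \<le> (1+d) * u"
proof (cases "u \<le> v")
  case True
  have "0 \<le> d * v" using assms by simp
  then show ?thesis using True assms(4) by (simp add: algebra_simps min_def max_def)
next
  case False
  have "0 \<le> d * u" using assms by simp
  then show ?thesis using False assms(4) by (simp add: algebra_simps min_def max_def)
qed

lemma lc_value_dist_le_of_null_excess:
  assumes p: "prob_density p" and f: "prob_density f" and d: "d \<ge> 0"
    and null: "emeasure lborel (ratio_excess_set p f a d) = 0"
  shows "\<bar>lc_value p - lc_value f\<bar> \<le> 2*d + enn2real (tail_mass f a)"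
proof (rule lc_value_dist_le[OF p f d])
  have "ratio_excess_set p f a d \<in> sets lborel"
    using p f by (intro ratio_excess_set_sets) (auto simp: prob_density_def)
  with null have "AE x in lborel. x \<notin> ratio_excess_set p f a d"
    by (intro AE_not_in null_setsI)
  then show "AE x in lborel. x \<in> {-a..a} \<longrightarrow> p x \<le> (1+d) * f x \<and> f x \<le> (1+d) * p x"
  proof eventually_elim
    case (elim x)
    show ?case
    proof
      assume "x \<in> {-a..a}"
      hence "max (p x) (f x) \<le> (1+d) * min (p x) (f x)"
        using elim by (simp add: ratio_excess_set_def not_less)
      then show "p x \<le> (1+d) * f x \<and> f x \<le> (1+d) * p x"
        using p f d two_sided_bound_of_max_le_min[of "p x" "f x" d] by (simp add: prob_density_def)
    qed
  qed
qed

lemma esssup_restrict_space_ge: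
  fixes g :: "'a \<Rightarrow> ennreal"
  assumes "E \<in> sets M" "E \<subseteq> S" "S \<in> sets M" "emeasure M E \<noteq> 0" "\<And>x. x \<in> E \<Longrightarrow> c \<le> g x"
  shows "c \<le> esssup (restrict_space M S) g"
proof (rule ccontr)
  assume "\<not> c \<le> esssup (restrict_space M S) g"
  hence "AE x in restrict_space M S. g x < c"
    using esssup_AE[of g "restrict_space M S"] by (auto elim: eventually_mono intro: le_less_trans)
  hence "AE x in M. x \<in> S \<longrightarrow> g x < c"
    using assms(3) by (subst (asm) AE_restrict_space_iff) auto
  hence "AE x in M. x \<notin> E"
    using assms(2,5) by (auto elim!: eventually_mono simp: not_less[symmetric])
  then show False using assms(1,4) by (auto simp: AE_iff_null_sets[symmetric] dest: null_setsD1)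
qed

lemma esssup_ratio_ge_1:
  fixes p q :: "real \<Rightarrow> real"
  assumes "a > 0" "\<And>x. 0 \<le> p x" "\<And>x. 0 \<le> q x"
  shows "1 \<le> esssup (restrict_space lborel {-a..a}) (\<lambda>x. ratio (p x) (q x))"
proof (rule esssup_restrict_space_ge[of "{-a..a}"])
  show "emeasure lborel {-a..a} \<noteq> 0" using assms(1) by simp
qed (use assms ratio_ge_1 in auto)

lemma esssup_ratio_ge_of_excess:
  assumes d: "d \<ge> 0" and p: "prob_density p" and q: "prob_density q"
    and pos: "emeasure lborel (ratio_excess_set p q a d) \<noteq> 0"
  shows "ennreal (1+d) \<le> esssup (restrict_space lborel {-a..a}) (\<lambda>x. ratio (p x) (q x))"
proof (rule esssup_restrict_space_ge[OF _ _ _ pos])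
  show "ratio_excess_set p q a d \<in> sets lborel"
    using p q by (intro ratio_excess_set_sets) (auto simp: prob_density_def)
  show "ratio_excess_set p q a d \<subseteq> {-a..a}" by (auto simp: ratio_excess_set_def)
  fix x assume "x \<in> ratio_excess_set p q a d"
  then show "ennreal (1+d) \<le> ratio (p x) (q x)"
    using p q d ratio_ge_of_excess[of "p x" "q x" d] by (simp add: ratio_excess_set_def prob_density_def)
qed simp

subsection \<open>Convergence in probability\<close>

lemma (in prob_space) prob_tendsto_0_of_expectation_tendsto_1:
  assumes d: "d > 0" and A: "\<And>n. A n \<in> events"
    and ge1: "\<And>n \<omega>. \<omega> \<in> space M \<Longrightarrow> 1 \<le> X n \<omega>"
    and ge_on_A: "\<And>n \<omega>. \<omega> \<in> A n \<Longrightarrow> ennreal (1+d) \<le> X n \<omega>"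
    and lim: "(\<lambda>n. \<integral>\<^sup>+ \<omega>. X n \<omega> \<partial>M) \<longlonglongrightarrow> 1"
  shows "(\<lambda>n. prob (A n)) \<longlonglongrightarrow> 0"
proof -
  have markov: "ennreal (1 + d * prob (A n)) \<le> (\<integral>\<^sup>+ \<omega>. X n \<omega> \<partial>M)" for n
  proof -
    have "(\<integral>\<^sup>+ \<omega>. 1 + ennreal d * indicator (A n) \<omega> \<partial>M) = 1 + ennreal d * emeasure M (A n)"
      using A[of n] by (subst nn_integral_add) (auto simp: nn_integral_cmult emeasure_space_1)
    also have "\<dots> = ennreal (1 + d * prob (A n))"
      using d by (simp add: emeasure_eq_measure ennreal_plus ennreal_mult)
    finally have "ennreal (1 + d * prob (A n)) = (\<integral>\<^sup>+ \<omega>. 1 + ennreal d * indicator (A n) \<omega> \<partial>M)" ..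
    also have "\<dots> \<le> (\<integral>\<^sup>+ \<omega>. X n \<omega> \<partial>M)"
    proof (rule nn_integral_mono)
      fix \<omega> assume "\<omega> \<in> space M"
      then show "1 + ennreal d * indicator (A n) \<omega> \<le> X n \<omega>"
        using ge1 ge_on_A d by (cases "\<omega> \<in> A n") (auto simp: ennreal_plus)
    qed
    finally show ?thesis .
  qed
  show ?thesis
  proof (rule order_tendstoI)
    fix y :: real assume "y < 0"
    then show "\<forall>\<^sub>F n in sequentially. y < prob (A n)"
      by (intro always_eventually allI) (meson less_le_trans measure_nonneg)
  next
    fix z :: real assume z: "0 < z"
    have "1 < ennreal (1 + d * z)" using z d by simp
    from order_tendstoD(2)[OF lim this]
    show "\<forall>\<^sub>F n in sequentially. prob (A n) < z"
    proof eventually_elim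
      case (elim n)
      have "ennreal (1 + d * prob (A n)) < ennreal (1 + d * z)"
        using markov[of n] elim by (rule le_less_trans)
      hence "1 + d * prob (A n) < 1 + d * z"
        using d z by (subst (asm) ennreal_less_iff) auto
      then show ?case using d by simp
    qed
  qed
qed

lemma ratio_excess_event_sets:
  assumes F: "(\<lambda>(\<omega>, x). F \<omega> x) \<in> borel_measurable (M \<Otimes>\<^sub>M lborel)"
    and q: "q \<in> borel_measurable borel"
  shows "{\<omega> \<in> space M. emeasure lborel (ratio_excess_set (F \<omega>) q a d) \<noteq> 0} \<in> sets M"
proof -
  have [measurable]: "(\<lambda>z. F (fst z) (snd z)) \<in> borel_measurable (M \<Otimes>\<^sub>M lborel)"
    using F by (simp add: split_beta')
  define S where "S = {z \<in> space (M \<Otimes>\<^sub>M lborel). snd z \<in> {-a..a} \<and>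
      (1+d) * min (F (fst z) (snd z)) (q (snd z)) < max (F (fst z) (snd z)) (q (snd z))}"
  have "S \<in> sets (M \<Otimes>\<^sub>M lborel)" unfolding S_def using q by measurable
  from lborel.measurable_emeasure_Pair[OF this]
  have "(\<lambda>\<omega>. emeasure lborel (ratio_excess_set (F \<omega>) q a d)) \<in> borel_measurable M"
    by (rule measurable_cong[THEN iffD1, rotated])
       (auto simp: S_def ratio_excess_set_def space_pair_measure)
  then have "{\<omega> \<in> space M. emeasure lborel (ratio_excess_set (F \<omega>) q a d) = 0} \<in> sets M"
    by (rule borel_measurable_eq) simp
  then show ?thesis by (rule sets.sets_Collect_neg)
qed

theorem mainTheorem8:
  fixes M :: "'w measure" and f :: "real \<Rightarrow> real"
    and fhat :: "nat \<Rightarrow> 'w \<Rightarrow> real \<Rightarrow> real"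
  assumes "prob_space M"
    and "prob_density f"
    and "\<And>n. (\<lambda>(\<omega>, x). fhat n \<omega> x) \<in> borel_measurable (M \<Otimes>\<^sub>M lborel)"
    and "\<And>n \<omega>. \<omega> \<in> space M \<Longrightarrow> prob_density (fhat n \<omega>)"
    and "\<And>a. a > 0 \<Longrightarrow>
           (\<lambda>n. \<integral>\<^sup>+ \<omega>. esssup (restrict_space lborel {-a..a})
                            (\<lambda>x. ratio (fhat n \<omega> x) (f x)) \<partial>M) \<longlonglongrightarrow> 1"
  shows "\<forall>\<epsilon>>0. \<exists>A. (\<forall>n. A n \<in> sets M \<and>
             {\<omega> \<in> space M. \<bar>lc_value (fhat n \<omega>) - lc_value f\<bar> > \<epsilon>} \<subseteq> A n)
           \<and> (\<lambda>n. measure M (A n)) \<longlonglongrightarrow> 0"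
proof (intro allI impI)
  fix \<epsilon> :: real assume \<epsilon>: "\<epsilon> > 0"
  interpret prob_space M by fact
  obtain a where a: "a > 0" "enn2real (tail_mass f a) < \<epsilon>/2"
    using exists_tail_mass_less[OF assms(2), of "\<epsilon>/2"] \<epsilon> by auto
  define d where "d = \<epsilon>/8"
  have d: "d > 0" using \<epsilon> unfolding d_def by simp
  define A where "A n = {\<omega> \<in> space M. emeasure lborel (ratio_excess_set (fhat n \<omega>) f a d) \<noteq> 0}" for n
  have A_sets: "A n \<in> sets M" for n
    unfolding A_def using assms(2)
    by (intro ratio_excess_event_sets[OF assms(3)]) (simp add: prob_density_def)
  have "{\<omega> \<in> space M. \<bar>lc_value (fhat n \<omega>) - lc_value f\<bar> > \<epsilon>} \<subseteq> A n" for n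
  proof (intro subsetI CollectI)
    fix \<omega> assume "\<omega> \<in> {\<omega> \<in> space M. \<bar>lc_value (fhat n \<omega>) - lc_value f\<bar> > \<epsilon>}"
    moreover have "\<bar>lc_value (fhat n \<omega>) - lc_value f\<bar> \<le> 2*d + enn2real (tail_mass f a)"
      if "\<omega> \<in> space M" "\<omega> \<notin> A n"
      using lc_value_dist_le_of_null_excess[OF assms(4) assms(2)] that d by (auto simp: A_def)
    ultimately show "\<omega> \<in> A n" using a(2) unfolding d_def by fastforce
  qed
  moreover have "(\<lambda>n. measure M (A n)) \<longlonglongrightarrow> 0"
  proof (rule prob_tendsto_0_of_expectation_tendsto_1[OF d A_sets _ _ assms(5)[OF a(1)]])
    show "1 \<le> esssup (restrict_space lborel {-a..a}) (\<lambda>x. ratio (fhat n \<omega> x) (f x))"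
      if "\<omega> \<in> space M" for n \<omega>
      using assms(2,4) that a(1) by (intro esssup_ratio_ge_1) (auto simp: prob_density_def)
    show "ennreal (1+d) \<le> esssup (restrict_space lborel {-a..a}) (\<lambda>x. ratio (fhat n \<omega> x) (f x))"
      if "\<omega> \<in> A n" for n \<omega>
      using assms(2,4) that d by (intro esssup_ratio_ge_of_excess) (auto simp: A_def)
  qed
  ultimately show "\<exists>A. (\<forall>n. A n \<in> sets M \<and>
             {\<omega> \<in> space M. \<bar>lc_value (fhat n \<omega>) - lc_value f\<bar> > \<epsilon>} \<subseteq> A n)
           \<and> (\<lambda>n. measure M (A n)) \<longlonglongrightarrow> 0"
    using A_sets by blast
qed

end
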